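(* Let $\sigma>0$, $\bar\gamma>0$, $c_\infty\ge0$, and let $\kappa:[0,\infty)\to\mathbb{R}$ be $L_\kappa$-Lipschitz with $\kappa(0)=0$; set $\tau_\gamma(w)=w+\gamma\kappa(w)$. Let $(\gamma_n)\subset(0,\bar\gamma]$ with $\gamma_n\to0$, $w_0\ge0$, let $(W^{(n)}_k)_k$ be the Markov chain with $W^{(n)}_0=w_0$ and kernel $Q_{\gamma_n}$, where $$Q_\gamma(w,A)=\delta_0(A)\int_{\mathbb{R}}\bar p_{\sigma^2\gamma}(\tau_\gamma(w)+\gamma c_\infty,g)\varphi(g)dg+\int_{\mathbb{R}}\mathbb{1}_A(\tau_\gamma(w)+\gamma c_\infty-2\sigma\gamma^{1/2}g)\{1-\bar p_{\sigma^2\gamma}(\tau_\gamma(w)+\gamma c_\infty,g)\}\varphi(g)dg,$$ $\bar p_{\sigma^2\gamma}(a,g)=1\wedge\varphi_{\sigma^2\gamma}(a-\sigma\sqrt\gamma g)/\varphi_{\sigma^2\gamma}(\sigma\sqrt\gamma g)$, and let $\mu_n$ be the law on $\mathbb W=C([0,\infty),\mathbb{R})$ (uniform topology on compacts) of the linear interpolation $\mathbf W^{(n)}_t=W^{(n)}_{\lfloor t/\gamma_n\rfloor}+\{W^{(n)}_{\lceil t/\gamma_n\rceil}-W^{(n)}_{\lfloor t/\gamma_n\rfloor}\}\{t/\gamma_n-\lfloor t/\gamma_n\rfloor\}$. Let $\mu_\infty$ be a limit point (for convergence in distribution) of $(\mu_n)_{n\in\mathbb{N}}$. Then $\mu_\infty$-almost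 everywhere, $\inf_{t\in[0,\infty)}\mathrm W_t\ge0$, where $(\mathrm W_t)$ is the canonical process on $\mathbb W$.
   Context: $\varphi$ is the standard normal density and $\varphi_s(t)=(2\pi s)^{-1/2}e^{-t^2/(2s)}$. *)

theory Defs
  imports "HOL-Probability.Probability"
begin

definition phi_var :: "real \<Rightarrow> real \<Rightarrow> real" where
  "phi_var s t = exp (- t\<^sup>2 / (2 * s)) / sqrt (2 * pi * s)"

definition pbar :: "real \<Rightarrow> real \<Rightarrow> real \<Rightarrow> real \<Rightarrow> real" where
  "pbar \<sigma> \<gamma> a g = min 1 (phi_var (\<sigma>\<^sup>2 * \<gamma>) (a - \<sigma> * sqrt \<gamma> * g)
                            / phi_var (\<sigma>\<^sup>2 * \<gamma>) (\<sigma> * sqrt \<gamma> * g))"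

definition tau :: "(real \<Rightarrow> real) \<Rightarrow> real \<Rightarrow> real \<Rightarrow> real" where
  "tau \<kappa> \<gamma> w = w + \<gamma> * \<kappa> w"

definition Qker :: "real \<Rightarrow> real \<Rightarrow> (real \<Rightarrow> real) \<Rightarrow> real \<Rightarrow> real \<Rightarrow> real set \<Rightarrow> real" where
  "Qker \<sigma> c_inf \<kappa> \<gamma> w A =
     (let a = tau \<kappa> \<gamma> w + \<gamma> * c_inf in
        indicator A 0 * (\<integral>g. pbar \<sigma> \<gamma> a g * std_normal_density g \<partial>lborel)
      + (\<integral>g. indicator A (a - 2 * \<sigma> * sqrt \<gamma> * g) * (1 - pbar \<sigma> \<gamma> a g)
              * std_normal_density g \<partial>lborel))"

(* (X k)_k is a Markov chain on (P) with initial state w0 and transition kernel Q,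
   w.r.t. its natural filtration: for all Borel A, B_0..B_k,
   P(X_0 in B_0, ..., X_k in B_k, X_{k+1} in A) = E[1{X_0 in B_0,...,X_k in B_k} Q(X_k, A)] *)
definition markov_chain :: "'a measure \<Rightarrow> (nat \<Rightarrow> 'a \<Rightarrow> real) \<Rightarrow> real \<Rightarrow> (real \<Rightarrow> real set \<Rightarrow> real) \<Rightarrow> bool" where
  "markov_chain P X w0 Q \<longleftrightarrow>
     prob_space P \<and> (\<forall>k. X k \<in> borel_measurable P) \<and>
     (AE \<omega> in P. X 0 \<omega> = w0) \<and>
     (\<forall>k A B. A \<in> sets borel \<longrightarrow> (\<forall>i. B i \<in> sets borel) \<longrightarrow>
        measure P {\<omega> \<in> space P. (\<forall>i\<le>k. X i \<omega> \<in> B i) \<and> X (Suc k) \<omega> \<in> A}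
        = (\<integral>\<omega>. indicator {\<omega> \<in> space P. \<forall>i\<le>k. X i \<omega> \<in> B i} \<omega> * Q (X k \<omega>) A \<partial>P))"

(* Path space W = C([0,oo), R); a path is represented as a function real => real
   continuous on [0,oo) and (normalised) equal to 0 on (-oo,0). *)
definition Wspace :: "(real \<Rightarrow> real) set" where
  "Wspace = {f. continuous_on {0..} f \<and> (\<forall>t<0. f t = 0)}"

(* topology of uniform convergence on compacts: generated by the sets
   {g. sup_{[0,k]} |g - f| < e}, f in W *)
definition Wtop :: "(real \<Rightarrow> real) topology" where
  "Wtop = subtopology
     (topology_generated_by
        {{g. \<forall>t\<in>{0..real k}. \<bar>g t - f t\<bar> < e} | f k e. f \<in> Wspace \<and> e > 0})
     Wspace"

definition borel_of :: "'a topology \<Rightarrow> 'a measure" where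
  "borel_of T = sigma (topspace T) {U. openin T U}"

definition interp :: "real \<Rightarrow> (nat \<Rightarrow> real) \<Rightarrow> real \<Rightarrow> real" where
  "interp \<gamma> x t = (if t < 0 then 0 else
      x (nat \<lfloor>t / \<gamma>\<rfloor>) + (x (nat \<lceil>t / \<gamma>\<rceil>) - x (nat \<lfloor>t / \<gamma>\<rfloor>)) * (t / \<gamma> - of_int \<lfloor>t / \<gamma>\<rfloor>))"

definition weak_conv :: "'a topology \<Rightarrow> (nat \<Rightarrow> 'a measure) \<Rightarrow> 'a measure \<Rightarrow> bool" where
  "weak_conv T \<mu> \<nu> \<longleftrightarrow>
     (\<forall>F. continuous_map T euclideanreal F \<and> bounded (F ` topspace T) \<longrightarrow>
        (\<lambda>n. \<integral>x. F x \<partial>\<mu> n) \<longlonglongrightarrow> (\<integral>x. F x \<partial>\<nu>))"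

end

theory Submission
  imports Defs
begin

text \<open>
  For \<open>w \<ge> 0\<close> and \<open>\<gamma> L\<^sub>\<kappa> \<le> 1\<close> the point \<open>a = \<tau>\<^sub>\<gamma>(w) + \<gamma> c\<^sub>\<infinity>\<close> is nonnegative.
  The ratio in \<open>p\<^sub>\<gamma>(a, g)\<close> is at least \<open>1\<close> exactly when \<open>a (a - 2\<sigma>\<surd>\<gamma> g) \<le> 0\<close>, so
  every point \<open>a - 2\<sigma>\<surd>\<gamma> g < 0\<close> carries weight \<open>1 - p\<^sub>\<gamma>(a, g) = 0\<close> in \<open>Q\<^sub>\<gamma>(w, \<cdot>)\<close>,
  which thus puts no mass on \<open>(-\<infinity>, 0)\<close>.  Hence for large \<open>n\<close> the chains, and
  their interpolations, are nonnegative.  Since \<open>{f. f t \<ge> 0}\<close> is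
  closed, this passes to every weak limit point for each fixed \<open>t\<close>; rational
  times and continuity of the paths give all \<open>t \<ge> 0\<close> at once.
\<close>

lemma pbar_eq_1_if_proposal_neg:
  assumes "\<sigma> > 0" "\<gamma> > 0" "a \<ge> 0" "a - 2 * \<sigma> * sqrt \<gamma> * g < 0"
  shows "pbar \<sigma> \<gamma> a g = 1"
proof -
  define s where "s = \<sigma> * sqrt \<gamma>"
  define v where "v = \<sigma>\<^sup>2 * \<gamma>"
  have v: "v > 0" using assms by (simp add: v_def)
  have "a * (a - 2 * s * g) \<le> 0" using assms by (simp add: s_def mult_nonneg_nonpos)
  hence "(a - s * g)\<^sup>2 \<le> (s * g)\<^sup>2" by (simp add: power2_eq_square algebra_simps)
  hence "- (s * g)\<^sup>2 / (2 * v) \<le> - (a - s * g)\<^sup>2 / (2 * v)"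
    using v by (simp add: divide_right_mono)
  hence "phi_var v (s * g) \<le> phi_var v (a - s * g)"
    unfolding phi_var_def using v by (simp add: divide_right_mono)
  moreover have "phi_var v (s * g) > 0" unfolding phi_var_def using v by simp
  ultimately have "phi_var v (a - s * g) / phi_var v (s * g) \<ge> 1" by simp
  thus ?thesis unfolding pbar_def s_def v_def by simp
qed

lemma Qker_lessThan_0_eq_0:
  assumes "\<sigma> > 0" "\<gamma> > 0" "tau \<kappa> \<gamma> w + \<gamma> * c \<ge> 0"
  shows "Qker \<sigma> c \<kappa> \<gamma> w {..<0} = 0"
proof -
  define a where "a = tau \<kappa> \<gamma> w + \<gamma> * c"
  have "(\<lambda>g. indicator {..<0} (a - 2 * \<sigma> * sqrt \<gamma> * g) * (1 - pbar \<sigma> \<gamma> a g)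
      * std_normal_density g) = (\<lambda>g. 0::real)"
    using pbar_eq_1_if_proposal_neg[of \<sigma> \<gamma> a] assms a_def by (auto simp: indicator_def)
  thus ?thesis unfolding Qker_def Let_def a_def[symmetric] by simp
qed

lemma tau_nonneg:
  assumes "L-lipschitz_on {0..} \<kappa>" "\<kappa> 0 = 0" "\<gamma> \<ge> 0" "\<gamma> * L \<le> 1" "w \<ge> 0"
  shows "tau \<kappa> \<gamma> w \<ge> 0"
proof -
  have "dist (\<kappa> w) (\<kappa> 0) \<le> L * dist w 0"
    by (rule lipschitz_onD[OF assms(1)]) (use assms(5) in auto)
  hence "- L * w \<le> \<kappa> w" using assms(2,5) by (simp add: dist_real_def abs_le_iff)
  hence "\<gamma> * (- L * w) \<le> \<gamma> * \<kappa> w" using assms(3) by (rule mult_left_mono)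
  moreover have "\<gamma> * L * w \<le> w" using mult_right_mono[OF assms(4,5)] by simp
  ultimately show ?thesis unfolding tau_def by (simp add: algebra_simps)
qed

lemma markov_chain_AE_invariant:
  assumes "markov_chain P X w0 Q" "S \<in> sets borel" "w0 \<in> S"
    and "\<And>w. w \<in> S \<Longrightarrow> Q w (- S) = 0"
  shows "AE \<omega> in P. \<forall>k. X k \<omega> \<in> S"
proof -
  have [measurable]: "\<And>k. X k \<in> borel_measurable P" and "prob_space P"
    and X0: "AE \<omega> in P. X 0 \<omega> = w0"
    and step: "\<And>k A B. A \<in> sets borel \<Longrightarrow> (\<forall>i. B i \<in> sets borel) \<Longrightarrow>
        measure P {\<omega> \<in> space P. (\<forall>i\<le>k. X i \<omega> \<in> B i) \<and> X (Suc k) \<omega> \<in> A}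
        = (\<integral>\<omega>. indicator {\<omega> \<in> space P. \<forall>i\<le>k. X i \<omega> \<in> B i} \<omega> * Q (X k \<omega>) A \<partial>P)"
    using assms(1) unfolding markov_chain_def by auto
  interpret prob_space P by fact
  have S [measurable]: "S \<in> sets borel" by fact
  have upto: "AE \<omega> in P. \<forall>i\<le>m. X i \<omega> \<in> S" for m
  proof (induction m)
    case 0
    show ?case using X0 by eventually_elim (simp add: assms(3))
  next
    case (Suc m)
    define E where "E = {\<omega> \<in> space P. (\<forall>i\<le>m. X i \<omega> \<in> S) \<and> X (Suc m) \<omega> \<in> - S}"
    have "measure P E = (\<integral>\<omega>. indicator {\<omega> \<in> space P. \<forall>i\<le>m. X i \<omega> \<in> S} \<omega> * Q (X m \<omega>) (- S) \<partial>P)"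
      unfolding E_def by (rule step) auto
    also have "\<dots> = (\<integral>\<omega>. 0 \<partial>P)"
      by (rule Bochner_Integration.integral_cong) (auto simp: indicator_def assms(4))
    finally have "measure P E = 0" by simp
    moreover have "E \<in> events" unfolding E_def by measurable
    ultimately have "AE \<omega> in P. \<omega> \<notin> E"
      by (intro AE_not_in null_setsI) (simp_all add: emeasure_eq_measure)
    with Suc.IH AE_space show ?case by eventually_elim (auto simp: E_def le_Suc_eq)
  qed
  show ?thesis unfolding AE_all_countable
  proof
    show "AE \<omega> in P. X k \<omega> \<in> S" for k using upto[of k] by eventually_elim simp
  qed
qed

lemma markov_chain_Qker_AE_nonneg:
  assumes "\<sigma> > 0" "\<gamma> > 0" "c \<ge> 0" "L-lipschitz_on {0..} \<kappa>" "\<kappa> 0 = 0" "\<gamma> * L \<le> 1"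
    and "w0 \<ge> 0" "markov_chain P X w0 (Qker \<sigma> c \<kappa> \<gamma>)"
  shows "AE \<omega> in P. \<forall>k. X k \<omega> \<ge> 0"
proof -
  have "Qker \<sigma> c \<kappa> \<gamma> w {..<0} = 0" if "w \<ge> 0" for w
    using tau_nonneg[OF assms(4,5) less_imp_le[OF assms(2)] assms(6) that] assms(2,3)
    by (intro Qker_lessThan_0_eq_0[OF assms(1,2)]) simp
  thus ?thesis using markov_chain_AE_invariant[OF assms(8), of "{0..}"] assms(7) by simp
qed

lemma eventually_mult_le_1_if_tendsto_0:
  fixes f :: "nat \<Rightarrow> real"
  assumes "f \<longlonglongrightarrow> 0"
  shows "eventually (\<lambda>n. f n * c \<le> 1) sequentially"
proof -
  have "(\<lambda>n. f n * c) \<longlonglongrightarrow> 0 * c" by (intro tendsto_intros assms)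
  hence "eventually (\<lambda>n. f n * c < 1) sequentially" by (intro order_tendstoD(2)) auto
  thus ?thesis by eventually_elim simp
qed

lemma emeasure_distr_le_emeasure_vimage:
  assumes "A \<in> sets N"
  shows "emeasure (distr M N f) A \<le> emeasure M (f -` A \<inter> space M)"
  unfolding distr_def emeasure_measure_of_conv
  using assms by (simp add: sets.sigma_sets_eq)

text \<open>
  Unlike \<open>AE_distr_iff\<close>, this needs no measurability of \<open>f\<close>: even then
  \<open>distr M N f\<close> is dominated by the preimage measure.
\<close>

lemma AE_distrI:
  assumes "{x \<in> space N. \<not> Q x} \<in> sets N" "AE \<omega> in M. Q (f \<omega>)"
  shows "AE x in distr M N f. Q x"
proof -
  obtain Z where Z: "{\<omega> \<in> space M. \<not> Q (f \<omega>)} \<subseteq> Z" "emeasure M Z = 0" "Z \<in> sets M"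
    using assms(2) by (rule AE_E)
  have "emeasure (distr M N f) {x \<in> space N. \<not> Q x}
      \<le> emeasure M (f -` {x \<in> space N. \<not> Q x} \<inter> space M)"
    by (rule emeasure_distr_le_emeasure_vimage[OF assms(1)])
  also have "\<dots> \<le> emeasure M Z" using Z by (intro emeasure_mono) auto
  finally have "{x \<in> space N. \<not> Q x} \<in> null_sets (distr M N f)"
    using assms(1) Z(2) by (intro null_setsI) auto
  thus ?thesis by (rule AE_I') auto
qed

lemma continuous_map_Wtop_eval:
  assumes "t \<ge> 0"
  shows "continuous_map Wtop euclideanreal (\<lambda>f. f t)"
  unfolding continuous_map
proof safe
  fix U :: "real set" assume "openin euclideanreal U"
  show "openin Wtop {f \<in> topspace Wtop. f t \<in> U}"
  proof (subst openin_subopen, safe)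
    fix f0 assume f0: "f0 \<in> topspace Wtop" "f0 t \<in> U"
    have f0W: "f0 \<in> Wspace" using f0 unfolding Wtop_def by simp
    have "open U" using \<open>openin euclideanreal U\<close> by simp
    then obtain e where e: "e > 0" "ball (f0 t) e \<subseteq> U"
      using f0 open_contains_ball by blast
    define k where "k = nat \<lceil>t\<rceil>"
    have tk: "t \<in> {0..real k}" using assms unfolding k_def by (simp add: real_nat_ceiling_ge)
    define B where "B = {g. \<forall>s\<in>{0..real k}. \<bar>g s - f0 s\<bar> < e} \<inter> Wspace"
    have "openin (topology_generated_by
        {{g. \<forall>t\<in>{0..real k}. \<bar>g t - f t\<bar> < e} | f k e. f \<in> Wspace \<and> e > 0})
        {g. \<forall>s\<in>{0..real k}. \<bar>g s - f0 s\<bar> < e}"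
      unfolding openin_topology_generated_by_iff
      by (rule generate_topology_on.Basis) (use f0W e in blast)
    hence B: "openin Wtop B" unfolding Wtop_def B_def openin_subtopology by blast
    moreover have "f0 \<in> B" using f0W e unfolding B_def by simp
    moreover have "B \<subseteq> {f \<in> topspace Wtop. f t \<in> U}"
    proof
      fix g assume g: "g \<in> B"
      hence "g t \<in> ball (f0 t) e" using tk unfolding B_def by (simp add: dist_real_def abs_minus_commute)
      thus "g \<in> {f \<in> topspace Wtop. f t \<in> U}" using e openin_subset[OF B] g by blast
    qed
    ultimately show "\<exists>T. openin Wtop T \<and> f0 \<in> T \<and> T \<subseteq> {f \<in> topspace Wtop. f t \<in> U}"
      by blast
  qed
qed simp

lemma borel_measurable_borel_of_continuous_map:
  assumes "continuous_map T euclideanreal F"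
  shows "F \<in> borel_measurable (borel_of T)"
proof (rule borel_measurableI)
  fix S :: "real set" assume "open S"
  hence "openin T {x \<in> topspace T. F x \<in> S}" using assms unfolding continuous_map by simp
  moreover have "F -` S \<inter> space (borel_of T) = {x \<in> topspace T. F x \<in> S}"
    unfolding borel_of_def by (auto simp: space_measure_of_conv)
  ultimately show "F -` S \<inter> space (borel_of T) \<in> sets (borel_of T)"
    unfolding borel_of_def using openin_subset
    by (auto simp: sets_measure_of_conv intro!: sigma_sets.Basic)
qed

lemma interp_nonneg:
  assumes "\<gamma> > 0" "\<And>k. x k \<ge> 0"
  shows "interp \<gamma> x t \<ge> 0"
proof (cases "t < 0")
  case False
  define \<theta> where "\<theta> = t / \<gamma> - of_int \<lfloor>t / \<gamma>\<rfloor>"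
  have "0 \<le> \<theta>" "\<theta> \<le> 1" unfolding \<theta>_def by linarith+
  have "interp \<gamma> x t = x (nat \<lfloor>t / \<gamma>\<rfloor>) * (1 - \<theta>) + x (nat \<lceil>t / \<gamma>\<rceil>) * \<theta>"
    using False unfolding interp_def \<theta>_def by (simp add: algebra_simps)
  also have "\<dots> \<ge> 0" using assms(2) \<open>0 \<le> \<theta>\<close> \<open>\<theta> \<le> 1\<close> by simp
  finally show ?thesis .
qed (simp add: interp_def)

lemma AE_distr_interp_nonneg:
  assumes "\<gamma> > 0" "t \<ge> 0" "AE \<omega> in P. \<forall>k. X k \<omega> \<ge> 0"
  shows "AE f in distr P (borel_of Wtop) (\<lambda>\<omega>. interp \<gamma> (\<lambda>k. X k \<omega>)). f t \<ge> 0"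
proof (rule AE_distrI[where Q="\<lambda>f. 0 \<le> f t"])
  show "{f \<in> space (borel_of Wtop). \<not> f t \<ge> 0} \<in> sets (borel_of Wtop)"
    using borel_measurable_borel_of_continuous_map[OF continuous_map_Wtop_eval[OF assms(2)]]
    by measurable
  show "AE \<omega> in P. interp \<gamma> (\<lambda>k. X k \<omega>) t \<ge> 0"
    using assms(3) by eventually_elim (simp add: interp_nonneg[OF assms(1)])
qed

lemma weak_conv_AE_nonneg:
  assumes "weak_conv T \<mu> \<nu>" "continuous_map T euclideanreal g"
    and "finite_measure \<nu>" "sets \<nu> = sets (borel_of T)" "\<And>n. sets (\<mu> n) = sets (borel_of T)"
    and "eventually (\<lambda>n. AE x in \<mu> n. g x \<ge> 0) sequentially"
  shows "AE x in \<nu>. g x \<ge> 0"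
proof -
  define F where "F = (\<lambda>x. min 1 (max 0 (- g x)))"
  have "continuous_map euclideanreal euclideanreal (\<lambda>y::real. min 1 (max 0 (- y)))"
    by (auto simp: continuous_map_iff_continuous2 intro!: continuous_intros)
  from continuous_map_compose[OF assms(2) this]
  have F_cont: "continuous_map T euclideanreal F" by (simp add: F_def o_def)
  have F_meas: "F \<in> borel_measurable (borel_of T)"
    by (rule borel_measurable_borel_of_continuous_map[OF F_cont])
  have "bounded (F ` topspace T)" unfolding bounded_iff F_def by (intro exI[of _ 1]) auto
  hence "(\<lambda>n. \<integral>x. F x \<partial>\<mu> n) \<longlonglongrightarrow> (\<integral>x. F x \<partial>\<nu>)"
    using assms(1) F_cont unfolding weak_conv_def by blast
  moreover have "eventually (\<lambda>n. (\<integral>x. F x \<partial>\<mu> n) = 0) sequentially"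
    using assms(6)
  proof eventually_elim
    case (elim n)
    have "F \<in> borel_measurable (\<mu> n)" using F_meas measurable_cong_sets[OF assms(5) refl] by blast
    moreover from elim have "AE x in \<mu> n. F x = 0" by eventually_elim (simp add: F_def)
    ultimately have "(\<integral>x. F x \<partial>\<mu> n) = (\<integral>x. 0 \<partial>\<mu> n)" by (intro integral_cong_AE) auto
    thus ?case by simp
  qed
  hence "(\<lambda>n. \<integral>x. F x \<partial>\<mu> n) \<longlonglongrightarrow> 0" by (rule tendsto_eventually)
  ultimately have "(\<integral>x. F x \<partial>\<nu>) = 0" by (rule LIMSEQ_unique)
  moreover have F_meas_\<nu>: "F \<in> borel_measurable \<nu>"
    using F_meas measurable_cong_sets[OF assms(4) refl] by blast
  moreover have "integrable \<nu> F"
    using F_meas_\<nu> by (intro finite_measure.integrable_const_bound[OF assms(3), where B=1])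
      (auto simp: F_def)
  moreover have "AE x in \<nu>. 0 \<le> F x" by (simp add: F_def)
  ultimately have "AE x in \<nu>. F x = 0" by (simp add: integral_nonneg_eq_0_iff_AE)
  thus ?thesis by eventually_elim (simp add: F_def)
qed

lemma nonneg_if_nonneg_on_Rats:
  fixes f :: "real \<Rightarrow> real"
  assumes "continuous_on {0..} f" "\<forall>q\<in>\<rat> \<inter> {0..}. f q \<ge> 0" "t \<ge> 0"
  shows "f t \<ge> 0"
proof (rule ccontr)
  assume "\<not> f t \<ge> 0"
  then obtain d where d: "d > 0" "\<forall>s\<in>{0..}. dist s t < d \<longrightarrow> dist (f s) (f t) < - f t"
    using assms(1,3) unfolding continuous_on_iff by (metis atLeast_iff neg_0_less_iff_less not_le)
  obtain q where "q \<in> \<rat>" "t < q" "q < t + d" using Rats_dense_in_real[of t "t + d"] d by auto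
  hence "dist (f q) (f t) < - f t" "f q \<ge> 0" using d assms(2,3) by (auto simp: dist_real_def)
  thus False by (auto simp: dist_real_def)
qed

lemma AE_Wtop_nonneg:
  assumes "sets \<nu> = sets (borel_of Wtop)" "\<And>t. t \<ge> 0 \<Longrightarrow> AE f in \<nu>. f t \<ge> 0"
  shows "AE f in \<nu>. \<forall>t\<in>{0..}. f t \<ge> 0"
proof -
  have "countable (\<rat> \<inter> {0::real..})" by (blast intro: countable_subset countable_rat)
  hence "AE f in \<nu>. \<forall>q\<in>\<rat> \<inter> {0..}. f q \<ge> 0"
    using assms(2) by (simp add: AE_ball_countable)
  moreover have "space \<nu> \<subseteq> Wspace"
    using sets_eq_imp_space_eq[OF assms(1)]
    by (simp add: borel_of_def space_measure_of_conv Wtop_def)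
  hence "AE f in \<nu>. continuous_on {0..} f" by (intro AE_I2) (auto simp: Wspace_def)
  ultimately show ?thesis by eventually_elim (blast intro: nonneg_if_nonneg_on_Rats)
qed

theorem proposition43:
  fixes \<sigma> \<gamma>bar c_inf L_\<kappa> w0 :: real
    and \<kappa> :: "real \<Rightarrow> real"
    and \<gamma> :: "nat \<Rightarrow> real"
    and P :: "nat \<Rightarrow> 'a measure"
    and X :: "nat \<Rightarrow> nat \<Rightarrow> 'a \<Rightarrow> real"
    and \<mu> :: "nat \<Rightarrow> (real \<Rightarrow> real) measure"
    and \<mu>_inf :: "(real \<Rightarrow> real) measure"
    and r :: "nat \<Rightarrow> nat"
  assumes "\<sigma> > 0" and "\<gamma>bar > 0" and "c_inf \<ge> 0"
    and "L_\<kappa>-lipschitz_on {0..} \<kappa>" and "\<kappa> 0 = 0"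
    and "\<And>n. \<gamma> n \<in> {0<..\<gamma>bar}" and "\<gamma> \<longlonglongrightarrow> 0"
    and "w0 \<ge> 0"
    and "\<And>n. markov_chain (P n) (X n) w0 (Qker \<sigma> c_inf \<kappa> (\<gamma> n))"
    and "\<And>n. \<mu> n = distr (P n) (borel_of Wtop) (\<lambda>\<omega>. interp (\<gamma> n) (\<lambda>k. X n k \<omega>))"
    and "strict_mono r"
    and "prob_space \<mu>_inf" and "sets \<mu>_inf = sets (borel_of Wtop)"
    and "weak_conv Wtop (\<lambda>j. \<mu> (r j)) \<mu>_inf"
  shows "AE f in \<mu>_inf. \<forall>t\<in>{0..}. f t \<ge> 0"
proof -
  have \<gamma>_pos: "\<gamma> n > 0" for n using assms(6)[of n] by simp
  have "eventually (\<lambda>n. AE \<omega> in P n. \<forall>k. X n k \<omega> \<ge> 0) sequentially"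
    using eventually_mult_le_1_if_tendsto_0[OF assms(7), of L_\<kappa>]
    by eventually_elim (rule markov_chain_Qker_AE_nonneg[OF assms(1) \<gamma>_pos assms(3-5) _ assms(8,9)])
  hence "eventually (\<lambda>n. AE f in \<mu> n. f t \<ge> 0) sequentially" if "t \<ge> 0" for t
    by eventually_elim (subst assms(10), erule AE_distr_interp_nonneg[OF \<gamma>_pos that])
  hence "eventually (\<lambda>j. AE f in \<mu> (r j). f t \<ge> 0) sequentially" if "t \<ge> 0" for t
    using that by (intro eventually_compose_filterlim[OF _ filterlim_subseq[OF assms(11)]])
  hence "AE f in \<mu>_inf. f t \<ge> 0" if "t \<ge> 0" for t
    using that assms(10,12,13)
    by (intro weak_conv_AE_nonneg[OF assms(14) continuous_map_Wtop_eval]) (auto simp: prob_space_def)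
  thus ?thesis by (rule AE_Wtop_nonneg[OF assms(13)])
qed

end
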